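(* Let $J$ be a quadratic Jordan algebra over an infinite field $F$ that satisfies the identity $x^n=0$, $n\ge2$. Then: (1) for every $a\in J$, the elements $a^{n+1},a^{n+2},\dots,a^{2n-1}$ are absolute zero divisors of $J$; (2) if $J$ satisfies the identities $x^n=x^{n+1}=\dots=x^{2n-1}=0$, then for every $a\in J$ the element $a^{n-1}$ is an absolute zero divisor of $J$.
   Context: A quadratic Jordan algebra over $F$ is a vector space $J$ with quadratic maps $x\mapsto x^2$ and $Q:J\to\operatorname{End}_F(J)$ (operators on the right), with $x\circ y=(x+y)^2-x^2-y^2$, $\{x,y,z\}=y(Q(x+z)-Q(x)-Q(z))$, satisfying (M1) $\{x,x,y\}=x^2\circ y$; (M2) $(yQ(x))\circ x=(y\circ x)Q(x)$; (M3) $x^2Q(x)=(x^2)^2$; (M4) $x^2Q(y)Q(x)=(yQ(x))^2$; (M5) $Q(x^2)=Q(x)^2$; (M6) $Q(yQ(x))=Q(x)Q(y)Q(x)$ and all their partial linearizations. Powers: $x^1=x$, $x^{2k}=(x^k)^2$, $x^{2k+1}=xQ(x^k)$. Here an element $a$ is called an absolute zero divisor if $Q(a)=0$. *)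

theory Defs
  imports Complex_Main
begin

text \<open>A quadratic Jordan algebra over a field of scalars of type 'k, carried by a type 'a.
  scale is the scalar multiplication, sq x is x^2, and Q x y is y Q(x)
  (operators act on the right).\<close>

definition jcirc :: "('a::ab_group_add \<Rightarrow> 'a) \<Rightarrow> 'a \<Rightarrow> 'a \<Rightarrow> 'a" where
  "jcirc sq x y = sq (x + y) - sq x - sq y"

definition jtriple :: "('a::ab_group_add \<Rightarrow> 'a \<Rightarrow> 'a) \<Rightarrow> 'a \<Rightarrow> 'a \<Rightarrow> 'a \<Rightarrow> 'a" where
  "jtriple Q x y z = Q (x + z) y - Q x y - Q z y"

definition quadratic_map :: "('k::field \<Rightarrow> 'a::ab_group_add \<Rightarrow> 'a) \<Rightarrow> ('k \<Rightarrow> 'b::ab_group_add \<Rightarrow> 'b)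
    \<Rightarrow> ('a \<Rightarrow> 'b) \<Rightarrow> bool" where
  "quadratic_map sa sb q \<longleftrightarrow>
     (\<forall>c x. q (sa c x) = sb (c * c) (q x)) \<and>
     (\<forall>x. Vector_Spaces.linear sa sb (\<lambda>y. q (x + y) - q x - q y)) \<and>
     (\<forall>y. Vector_Spaces.linear sa sb (\<lambda>x. q (x + y) - q x - q y))"

definition quad_jordan :: "('k::field \<Rightarrow> 'a::ab_group_add \<Rightarrow> 'a) \<Rightarrow> ('a \<Rightarrow> 'a) \<Rightarrow> ('a \<Rightarrow> 'a \<Rightarrow> 'a) \<Rightarrow> bool" where
  "quad_jordan scale sq Q \<longleftrightarrow>
     vector_space scale \<and>
     quadratic_map scale scale sq \<and>
     (\<forall>x. Vector_Spaces.linear scale scale (Q x)) \<and>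
     (\<forall>y. quadratic_map scale scale (\<lambda>x. Q x y)) \<and>
     (\<forall>x y. jtriple Q x x y = jcirc sq (sq x) y) \<and>                        \<comment> \<open>M1\<close>
     (\<forall>x y. jcirc sq (Q x y) x = Q x (jcirc sq y x)) \<and>                    \<comment> \<open>M2\<close>
     (\<forall>x. Q x (sq x) = sq (sq x)) \<and>                                       \<comment> \<open>M3\<close>
     (\<forall>x y. Q x (Q y (sq x)) = sq (Q x y)) \<and>                              \<comment> \<open>M4\<close>
     (\<forall>x z. Q (sq x) z = Q x (Q x z)) \<and>                                   \<comment> \<open>M5\<close>
     (\<forall>x y z. Q (Q x y) z = Q x (Q y (Q x z)))                             \<comment> \<open>M6\<close>"

text \<open>Powers: x^1 = x, x^(2k) = (x^k)^2, x^(2k+1) = x Q(x^k). (x^0 is a dummy value.)\<close>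

fun jpow :: "('a \<Rightarrow> 'a) \<Rightarrow> ('a \<Rightarrow> 'a \<Rightarrow> 'a) \<Rightarrow> nat \<Rightarrow> 'a \<Rightarrow> 'a" where
  "jpow sq Q n x =
     (if n \<le> 1 then x
      else if even n then sq (jpow sq Q (n div 2) x)
      else Q (jpow sq Q (n div 2) x) x)"

definition abs_zero_divisor :: "('a::zero \<Rightarrow> 'a \<Rightarrow> 'a) \<Rightarrow> 'a \<Rightarrow> bool" where
  "abs_zero_divisor Q a \<longleftrightarrow> Q a = (\<lambda>_. 0)"

end

theory Submission
  imports Defs
begin

text \<open>
  By M5 and M6, Q(x^k) = Q(x)^k; hence Q(a^k) = Q(a)^(k-n) Q(a^n) = 0 for k > n.

  For the second part, identities are linearized: replacing x by x + c z turns both sides into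
  polynomial maps of the scalar c, and over an infinite field their linear coefficients agree.
  Linearizing M1-M6 shows that, for V = (y \<mapsto> x \<circ> y) and U = Q(x), both {x, x^k, -} and
  (y \<mapsto> x^(k+1) \<circ> y) equal the Lucas polynomial L_(k+1)(V, U), where L_0 = 2, L_1 = V and
  L_(m+2) = V L_(m+1) - U L_m; the induction rests on L_(b+m) L_b = L_(2b+m) + U^b L_m.
  Hence x^n = 0 forces {x, x^(n-1), -} = 0 and then {x^(n-1), x, -} = 0, as the two triple
  products add up to 2 (x^n \<circ> -). Linearizing x^(2n-1) = x Q(x^(n-1)) = 0 at a in direction b
  leaves b Q(a^(n-1)) = 0.
\<close>

section \<open>Lucas polynomials of commuting additive maps\<close>

fun lucas :: "('a::ab_group_add \<Rightarrow> 'a) \<Rightarrow> ('a \<Rightarrow> 'a) \<Rightarrow> nat \<Rightarrow> 'a \<Rightarrow> 'a" where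
  "lucas V U 0 z = z + z"
| "lucas V U (Suc 0) z = V z"
| "lucas V U (Suc (Suc m)) z = lucas V U (Suc m) (V z) - U (lucas V U m z)"

locale commuting_additive = V: additive V + U: additive U
  for V U :: "'a::ab_group_add \<Rightarrow> 'a" +
  assumes commute: "V (U z) = U (V z)"
begin

lemma lucas_add: "lucas V U m (a + b) = lucas V U m a + lucas V U m b"
  by (induction m arbitrary: a b rule: induct_nat_012) (simp_all add: V.add U.add)

sublocale L: additive "lucas V U m"
  by unfold_locales (rule lucas_add)

lemma lucas_commute_V: "lucas V U m (V z) = V (lucas V U m z)"
  by (induction m arbitrary: z rule: induct_nat_012) (simp_all add: V.add V.diff commute)

lemma lucas_commute_U: "lucas V U m (U z) = U (lucas V U m z)"
  by (induction m arbitrary: z rule: induct_nat_012) (simp_all add: U.add U.diff commute)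

lemma U_power_add: "(U ^^ j) (a + b) = (U ^^ j) a + (U ^^ j) b"
  by (induction j) (simp_all add: U.add)

lemma additive_U_power: "additive (U ^^ j)"
  by unfold_locales (rule U_power_add)

lemma lucas_product:
  "lucas V U (b + m) (lucas V U b z) = lucas V U (2 * b + m) z + (U ^^ b) (lucas V U m z)"
proof (induction b arbitrary: m z rule: induct_nat_012)
  case 0
  show ?case by (simp add: L.add)
next
  case 1
  show ?case by (simp add: algebra_simps)
next
  case (ge2 b)
  interpret Ub: additive "U ^^ b" by (rule additive_U_power)
  have "lucas V U (Suc (Suc b) + m) (lucas V U (Suc (Suc b)) z)
      = lucas V U (Suc b + Suc m) (lucas V U (Suc b) (V z))
        - U (lucas V U (b + Suc (Suc m)) (lucas V U b z))"
    by (simp only: lucas.simps(3)[of V U b z] L.diff lucas_commute_U add_Suc add_Suc_right)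
  also have "\<dots> = lucas V U (2 * Suc b + Suc m) (V z) + (U ^^ Suc b) (lucas V U (Suc m) (V z))
      - U (lucas V U (2 * b + Suc (Suc m)) z + (U ^^ b) (lucas V U (Suc (Suc m)) z))"
    by (simp only: ge2.IH)
  also have "\<dots> = lucas V U (2 * Suc (Suc b) + m) z
      + (U ^^ Suc b) (lucas V U (Suc m) (V z) - lucas V U (Suc (Suc m)) z)"
  proof -
    have "lucas V U (2 * Suc (Suc b) + m) z
        = lucas V U (2 * Suc b + Suc m) (V z) - U (lucas V U (2 * b + Suc (Suc m)) z)"
      by (simp flip: lucas.simps(3) add: numeral_2_eq_2)
    then show ?thesis
      by (simp add: U.add U.diff Ub.diff funpow_swap1 del: lucas.simps)
  qed
  also have "\<dots> = lucas V U (2 * Suc (Suc b) + m) z + (U ^^ Suc (Suc b)) (lucas V U m z)"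
    by (simp add: U.diff funpow_swap1)
  finally show ?case .
qed

end

section \<open>Polynomial maps from the scalars into a vector space\<close>

lemmas linear_map_add = module_hom.add[OF module_hom_linearI]
  and linear_map_scale = module_hom.scale[OF module_hom_linearI]
  and linear_map_sum = module_hom.sum[OF module_hom_linearI]
  and linear_map_zero = module_hom.zero[OF module_hom_linearI]

definition poly_map_deg :: "('k::field \<Rightarrow> 'a::ab_group_add \<Rightarrow> 'a) \<Rightarrow> nat \<Rightarrow> ('k \<Rightarrow> 'a) \<Rightarrow> bool" where
  "poly_map_deg scale N f \<longleftrightarrow> (\<exists>v. \<forall>c. f c = (\<Sum>i\<le>N. scale (c ^ i) (v i)))"

definition poly_map :: "('k::field \<Rightarrow> 'a::ab_group_add \<Rightarrow> 'a) \<Rightarrow> ('k \<Rightarrow> 'a) \<Rightarrow> bool" where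
  "poly_map scale f \<longleftrightarrow> (\<exists>N. poly_map_deg scale N f)"

context vector_space
begin

lemma scale_four: "4 *s v = v + v + v + v"
  using scale_left_distrib[of 2 2 v] scale_left_distrib[of 1 1 v] by (simp add: add.assoc)

lemma poly_map_deg_monomial: "k \<le> N \<Longrightarrow> poly_map_deg scale N (\<lambda>c. c ^ k *s v)"
  unfolding poly_map_deg_def
  by (rule exI[of _ "\<lambda>i. if i = k then v else 0"]) (simp add: if_distrib cong: if_cong)

lemma poly_map_deg_add:
  "poly_map_deg scale N f \<Longrightarrow> poly_map_deg scale N g \<Longrightarrow> poly_map_deg scale N (\<lambda>c. f c + g c)"
proof -
  assume "poly_map_deg scale N f" "poly_map_deg scale N g"
  then obtain v w where "\<And>c. f c = (\<Sum>i\<le>N. c ^ i *s v i)" "\<And>c. g c = (\<Sum>i\<le>N. c ^ i *s w i)"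
    unfolding poly_map_deg_def by blast
  then have "\<forall>c. f c + g c = (\<Sum>i\<le>N. c ^ i *s (v i + w i))"
    by (simp add: scale_right_distrib sum.distrib)
  then show ?thesis unfolding poly_map_deg_def by (rule exI[of _ "\<lambda>i. v i + w i"])
qed

lemma poly_map_deg_sum:
  "finite A \<Longrightarrow> (\<And>i. i \<in> A \<Longrightarrow> poly_map_deg scale N (F i)) \<Longrightarrow> poly_map_deg scale N (\<lambda>c. \<Sum>i\<in>A. F i c)"
proof (induction A rule: finite_induct)
  case empty
  show ?case using poly_map_deg_monomial[of 0 N 0] by simp
next
  case (insert x A)
  then show ?case by (simp add: poly_map_deg_add)
qed

lemma poly_map_deg_mono: "N \<le> M \<Longrightarrow> poly_map_deg scale N f \<Longrightarrow> poly_map_deg scale M f"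
proof -
  assume "N \<le> M" "poly_map_deg scale N f"
  then obtain v where v: "\<And>c. f c = (\<Sum>i\<le>N. c ^ i *s v i)"
    unfolding poly_map_deg_def by blast
  have "poly_map_deg scale M (\<lambda>c. \<Sum>i\<le>N. c ^ i *s v i)"
    using \<open>N \<le> M\<close> by (intro poly_map_deg_sum poly_map_deg_monomial) auto
  moreover have "f = (\<lambda>c. \<Sum>i\<le>N. c ^ i *s v i)" using v by blast
  ultimately show ?thesis by simp
qed

lemma poly_map_monomial: "poly_map scale (\<lambda>c. c ^ k *s v)"
  unfolding poly_map_def using poly_map_deg_monomial by blast

lemma poly_map_const: "poly_map scale (\<lambda>c. v)"
  using poly_map_monomial[of 0 v] by simp

lemma poly_map_add: "poly_map scale f \<Longrightarrow> poly_map scale g \<Longrightarrow> poly_map scale (\<lambda>c. f c + g c)"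
proof -
  assume "poly_map scale f" "poly_map scale g"
  then obtain N M where "poly_map_deg scale N f" "poly_map_deg scale M g"
    unfolding poly_map_def by blast
  then have "poly_map_deg scale (max N M) (\<lambda>c. f c + g c)"
    using poly_map_deg_mono[of N "max N M"] poly_map_deg_mono[of M "max N M"]
    by (intro poly_map_deg_add) auto
  then show ?thesis unfolding poly_map_def by blast
qed

lemma poly_map_sum:
  "finite A \<Longrightarrow> (\<And>i. i \<in> A \<Longrightarrow> poly_map scale (F i)) \<Longrightarrow> poly_map scale (\<lambda>c. \<Sum>i\<in>A. F i c)"
  by (induction A rule: finite_induct) (simp_all add: poly_map_const poly_map_add)

lemma poly_mapE:
  assumes "poly_map scale f"
  obtains N v where "f = (\<lambda>c. \<Sum>i\<le>N. c ^ i *s v i)"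
  using assms unfolding poly_map_def poly_map_deg_def by blast

lemma poly_map_linear:
  assumes "Vector_Spaces.linear (*s) (*s) L" and "poly_map scale f"
  shows "poly_map scale (\<lambda>c. L (f c))"
proof -
  interpret L: module_hom scale scale L using assms(1) by (rule module_hom_linearI)
  obtain N v where "f = (\<lambda>c. \<Sum>i\<le>N. c ^ i *s v i)" using assms(2) by (rule poly_mapE)
  then have "\<And>c. L (f c) = (\<Sum>i\<le>N. c ^ i *s L (v i))" by (simp add: L.sum L.scale)
  then show ?thesis by (simp add: poly_map_sum poly_map_monomial)
qed

lemma poly_map_diff: "poly_map scale f \<Longrightarrow> poly_map scale g \<Longrightarrow> poly_map scale (\<lambda>c. f c - g c)"
  using poly_map_add[of f "\<lambda>c. - g c"] poly_map_linear[OF linear_uminus, of g] by simp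

lemma poly_map_scale_power: "poly_map scale f \<Longrightarrow> poly_map scale (\<lambda>c. c ^ k *s f c)"
proof -
  assume "poly_map scale f"
  then obtain N v where "f = (\<lambda>c. \<Sum>i\<le>N. c ^ i *s v i)" by (rule poly_mapE)
  then have "\<And>c. c ^ k *s f c = (\<Sum>i\<le>N. c ^ (k + i) *s v i)"
    by (simp add: scale_sum_right power_add)
  then show ?thesis by (simp add: poly_map_sum poly_map_monomial)
qed

lemma poly_map_scale: "poly_map scale f \<Longrightarrow> poly_map scale (\<lambda>c. c *s f c)"
  using poly_map_scale_power[of f 1] by simp

lemma poly_map_bilinear:
  assumes lin1: "\<And>x. Vector_Spaces.linear (*s) (*s) (op x)"
    and lin2: "\<And>y. Vector_Spaces.linear (*s) (*s) (\<lambda>x. op x y)"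
    and "poly_map scale f" "poly_map scale g"
  shows "poly_map scale (\<lambda>c. op (f c) (g c))"
proof -
  obtain N v where v: "f = (\<lambda>c. \<Sum>i\<le>N. c ^ i *s v i)" using assms(3) by (rule poly_mapE)
  obtain M w where w: "g = (\<lambda>c. \<Sum>j\<le>M. c ^ j *s w j)" using assms(4) by (rule poly_mapE)
  have op1: "op x (\<Sum>j\<le>M. c ^ j *s w j) = (\<Sum>j\<le>M. c ^ j *s op x (w j))" for x c
    by (simp add: linear_map_sum[OF lin1] linear_map_scale[OF lin1])
  have op2: "op (\<Sum>i\<le>N. c ^ i *s v i) y = (\<Sum>i\<le>N. c ^ i *s op (v i) y)" for y c
    by (simp add: linear_map_sum[OF lin2] linear_map_scale[OF lin2])
  have "(\<lambda>c. op (f c) (g c)) = (\<lambda>c. \<Sum>j\<le>M. \<Sum>i\<le>N. c ^ (j + i) *s op (v i) (w j))"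
    by (simp add: v w op1 op2 scale_sum_right power_add mult.commute)
  then show ?thesis by (simp only:) (intro poly_map_sum poly_map_monomial finite_atMost)
qed

lemma poly_map_quadratic:
  assumes polar: "\<And>x y. q (x + y) = q x + q y + P x y"
    and homogeneous: "\<And>a x. q (a *s x) = (a * a) *s q x"
    and lin1: "\<And>x. Vector_Spaces.linear (*s) (*s) (P x)"
    and lin2: "\<And>y. Vector_Spaces.linear (*s) (*s) (\<lambda>x. P x y)"
    and "poly_map scale f"
  shows "poly_map scale (\<lambda>c. q (f c))"
proof -
  obtain N v where v: "f = (\<lambda>c. \<Sum>i\<le>N. c ^ i *s v i)" using assms(5) by (rule poly_mapE)
  have finite_sums: "poly_map scale (\<lambda>c. q (\<Sum>i\<in>A. c ^ i *s v i))" if "finite A" for A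
    using that
  proof (induction A rule: finite_induct)
    case empty
    have "q 0 = 0" using homogeneous[of 0 0] by simp
    then show ?case by (simp add: poly_map_const)
  next
    case (insert k A)
    have "poly_map scale (\<lambda>c. P (c ^ k *s v k) (\<Sum>i\<in>A. c ^ i *s v i))"
      using insert.hyps
      by (intro poly_map_bilinear[OF lin1 lin2] poly_map_monomial poly_map_sum)
    then have "poly_map scale (\<lambda>c. c ^ (k + k) *s q (v k) + q (\<Sum>i\<in>A. c ^ i *s v i)
        + P (c ^ k *s v k) (\<Sum>i\<in>A. c ^ i *s v i))"
      by (intro poly_map_add poly_map_monomial insert.IH)
    then show ?case using insert.hyps by (simp add: polar homogeneous power_add)
  qed
  show ?thesis using finite_sums[OF finite_atMost] by (simp only: v)
qed

lemma poly_map_deg_divide: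
  assumes "poly_map_deg scale (Suc N) f"
  obtains g where "poly_map_deg scale N g" and "\<And>c. f c - f c0 = (c - c0) *s g c"
proof -
  obtain v where v: "\<And>c. f c = (\<Sum>i\<le>Suc N. c ^ i *s v i)"
    using assms unfolding poly_map_deg_def by blast
  define g where "g c = (\<Sum>i\<le>Suc N. \<Sum>j<i. c ^ j *s (c0 ^ (i - Suc j) *s v i))" for c
  have "poly_map_deg scale N g"
    unfolding g_def by (intro poly_map_deg_sum poly_map_deg_monomial) auto
  moreover have "f c - f c0 = (c - c0) *s g c" for c
  proof -
    have term_diff: "c ^ i *s v i - c0 ^ i *s v i
        = (c - c0) *s (\<Sum>j<i. c ^ j *s (c0 ^ (i - Suc j) *s v i))" for i
      by (simp add: power_diff_sumr2 scale_sum_right scale_sum_left flip: scale_left_diff_distrib)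
        (simp add: sum_distrib_left mult_ac scale_sum_left)
    have "f c - f c0 = (\<Sum>i\<le>Suc N. c ^ i *s v i - c0 ^ i *s v i)"
      by (simp only: v sum_subtractf)
    also have "\<dots> = (\<Sum>i\<le>Suc N. (c - c0) *s (\<Sum>j<i. c ^ j *s (c0 ^ (i - Suc j) *s v i)))"
      by (intro sum.cong refl term_diff)
    finally show ?thesis by (simp only: g_def scale_sum_right)
  qed
  ultimately show ?thesis using that by blast
qed

lemma poly_map_deg_eq_0:
  assumes "poly_map_deg scale N f" and "infinite S" and "\<And>c. c \<in> S \<Longrightarrow> f c = 0"
  shows "f c = 0"
  using assms
proof (induction N arbitrary: f S)
  case 0
  then obtain v where "\<And>c. f c = v 0" unfolding poly_map_deg_def by auto
  moreover obtain c1 where "c1 \<in> S" using \<open>infinite S\<close> infinite_imp_nonempty by blast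
  ultimately show ?case using "0.prems"(3) by metis
next
  case (Suc N)
  obtain c0 where c0: "c0 \<in> S" using \<open>infinite S\<close> infinite_imp_nonempty by blast
  obtain g where g: "poly_map_deg scale N g" "\<And>c. f c - f c0 = (c - c0) *s g c"
    using poly_map_deg_divide[OF Suc.prems(1), of c0] by blast
  have "g c = 0" if "c \<in> S - {c0}" for c
    using that g(2)[of c] c0 Suc.prems(3) by simp
  then have "g c = 0" using Suc.IH[OF g(1)] \<open>infinite S\<close> by (metis infinite_remove)
  then show ?case using g(2)[of c] c0 Suc.prems(3) by simp
qed

lemma poly_map_eq_0:
  "poly_map scale f \<Longrightarrow> infinite S \<Longrightarrow> (\<And>c. c \<in> S \<Longrightarrow> f c = 0) \<Longrightarrow> f c = 0"
  unfolding poly_map_def using poly_map_deg_eq_0 by blast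

end

definition poly_expansion ::
    "('k::field \<Rightarrow> 'a::ab_group_add \<Rightarrow> 'a) \<Rightarrow> ('k \<Rightarrow> 'a) \<Rightarrow> 'a \<Rightarrow> 'a \<Rightarrow> bool" where
  "poly_expansion scale f A B \<longleftrightarrow>
     (\<exists>Y. poly_map scale Y \<and> Y 0 = B \<and> (\<forall>c. f c = A + scale c (Y c)))"

context vector_space
begin

lemma poly_expansionI:
  "poly_map scale Y \<Longrightarrow> (\<And>c. f c = A + c *s Y c) \<Longrightarrow> poly_expansion scale f A (Y 0)"
  unfolding poly_expansion_def by blast

lemma poly_expansionE:
  assumes "poly_expansion scale f A B"
  obtains Y where "poly_map scale Y" "Y 0 = B" "f = (\<lambda>c. A + c *s Y c)"
  using assms unfolding poly_expansion_def by blast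

lemma poly_expansion_poly_map: "poly_expansion scale f A B \<Longrightarrow> poly_map scale f"
  by (elim poly_expansionE) (simp add: poly_map_add poly_map_const poly_map_scale)

lemma poly_expansion_const: "poly_expansion scale (\<lambda>c. a) a 0"
  using poly_expansionI[of "\<lambda>c. 0"] by (simp add: poly_map_const)

lemma poly_expansion_line: "poly_expansion scale (\<lambda>c. x + c *s z) x z"
  using poly_expansionI[of "\<lambda>c. z"] by (simp add: poly_map_const)

lemma poly_expansion_add_scaled:
  assumes "poly_expansion scale f A B" and "poly_map scale W"
  shows "poly_expansion scale (\<lambda>c. f c + c *s W c) A (B + W 0)"
proof -
  obtain Y where Y: "poly_map scale Y" "Y 0 = B" "f = (\<lambda>c. A + c *s Y c)"
    using assms(1) by (rule poly_expansionE)
  show ?thesis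
    using poly_expansionI[of "\<lambda>c. Y c + W c"] Y assms(2)
    by (simp add: poly_map_add scale_right_distrib add.assoc)
qed

lemma poly_expansion_bilinear:
  assumes lin1: "\<And>x. Vector_Spaces.linear (*s) (*s) (op x)"
    and lin2: "\<And>y. Vector_Spaces.linear (*s) (*s) (\<lambda>x. op x y)"
    and f: "poly_expansion scale f A B" and g: "poly_expansion scale g C D"
  shows "poly_expansion scale (\<lambda>c. op (f c) (g c)) (op A C) (op B C + op A D)"
proof -
  obtain Y where Y: "poly_map scale Y" "Y 0 = B" "f = (\<lambda>c. A + c *s Y c)"
    using f by (rule poly_expansionE)
  obtain X where X: "poly_map scale X" "X 0 = D" "g = (\<lambda>c. C + c *s X c)"
    using g by (rule poly_expansionE)
  have "op (f c) (g c) = op A C + c *s (op A (X c) + op (Y c) (g c))" for c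
    using linear_map_add[OF lin1] linear_map_scale[OF lin1]
      linear_map_add[OF lin2] linear_map_scale[OF lin2]
    by (simp add: Y(3) X(3) scale_right_distrib algebra_simps)
  moreover have "poly_map scale (\<lambda>c. op A (X c) + op (Y c) (g c))"
    using poly_map_linear[OF lin1 X(1)]
      poly_map_bilinear[OF lin1 lin2 Y(1) poly_expansion_poly_map[OF g]]
    by (rule poly_map_add)
  ultimately have "poly_expansion scale (\<lambda>c. op (f c) (g c)) (op A C) (op A (X 0) + op (Y 0) (g 0))"
    by (rule poly_expansionI[rotated])
  then show ?thesis by (simp add: X Y add.commute)
qed

lemma poly_expansion_quadratic:
  assumes polar: "\<And>x y. q (x + y) = q x + q y + P x y"
    and homogeneous: "\<And>a x. q (a *s x) = (a * a) *s q x"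
    and lin1: "\<And>x. Vector_Spaces.linear (*s) (*s) (P x)"
    and lin2: "\<And>y. Vector_Spaces.linear (*s) (*s) (\<lambda>x. P x y)"
    and f: "poly_expansion scale f A B"
  shows "poly_expansion scale (\<lambda>c. q (f c)) (q A) (P A B)"
proof -
  obtain Y where Y: "poly_map scale Y" "Y 0 = B" "f = (\<lambda>c. A + c *s Y c)"
    using f by (rule poly_expansionE)
  have "q (f c) = q A + c *s (P A (Y c) + c *s q (Y c))" for c
    using linear_map_scale[OF lin1]
    by (simp add: Y(3) polar homogeneous scale_right_distrib algebra_simps)
  moreover have "poly_map scale (\<lambda>c. P A (Y c) + c *s q (Y c))"
    by (intro poly_map_add poly_map_linear[OF lin1] poly_map_scale
        poly_map_quadratic[OF polar homogeneous lin1 lin2] Y(1))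
  ultimately have "poly_expansion scale (\<lambda>c. q (f c)) (q A) (P A (Y 0) + 0 *s q (Y 0))"
    by (rule poly_expansionI[rotated])
  then show ?thesis by (simp add: Y)
qed

lemma poly_expansion_unique:
  assumes "infinite (UNIV :: 'a set)"
    and "poly_expansion scale f A B" and "poly_expansion scale f A' B'"
  shows "B = B'"
proof -
  obtain Y where Y: "poly_map scale Y" "Y 0 = B" "f = (\<lambda>c. A + c *s Y c)"
    using assms(2) by (rule poly_expansionE)
  obtain Y' where Y': "poly_map scale Y'" "Y' 0 = B'" "f = (\<lambda>c. A' + c *s Y' c)"
    using assms(3) by (rule poly_expansionE)
  have same: "A + c *s Y c = A' + c *s Y' c" for c
    using Y(3) Y'(3) by meson
  then have "Y c - Y' c = 0" if "c \<in> UNIV - {0}" for c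
    using that same[of 0] same[of c] by (simp flip: scale_right_diff_distrib)
  then have "Y 0 - Y' 0 = 0"
    using poly_map_eq_0[OF poly_map_diff[OF Y(1) Y'(1)]] assms(1) by (meson infinite_remove)
  then show ?thesis using Y(2) Y'(2) by simp
qed

end

section \<open>Powers in a quadratic Jordan algebra\<close>

lemma positive_nat_parity_cases:
  assumes "(k::nat) \<ge> 1"
  obtains (even) j where "k = Suc (Suc (2 * j))" | (odd) j where "k = Suc (2 * j)"
proof (cases "even k")
  case True
  then obtain h where "k = 2 * h" by blast
  with assms have "k = Suc (Suc (2 * (h - 1)))" by simp
  then show ?thesis by (rule that(1))
next
  case False
  then show ?thesis using that(2) by (auto elim: oddE)
qed

locale quadratic_jordan =
  fixes scale :: "'k::field \<Rightarrow> 'a::ab_group_add \<Rightarrow> 'a" (infixr \<open>*s\<close> 75)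
    and sq :: "'a \<Rightarrow> 'a" and Q :: "'a \<Rightarrow> 'a \<Rightarrow> 'a"
  assumes quad_jordan: "quad_jordan scale sq Q"
begin

sublocale vector_space scale
  using quad_jordan unfolding quad_jordan_def by blast

abbreviation circ :: "'a \<Rightarrow> 'a \<Rightarrow> 'a" where "circ \<equiv> jcirc sq"
abbreviation triple :: "'a \<Rightarrow> 'a \<Rightarrow> 'a \<Rightarrow> 'a" where "triple \<equiv> jtriple Q"
abbreviation pow :: "nat \<Rightarrow> 'a \<Rightarrow> 'a" where "pow \<equiv> jpow sq Q"

lemma M1: "triple x x y = circ (sq x) y"
  and M2: "circ (Q x y) x = Q x (circ y x)"
  and M3: "Q x (sq x) = sq (sq x)"
  and M4: "Q x (Q y (sq x)) = sq (Q x y)"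
  and M5: "Q (sq x) z = Q x (Q x z)"
  and M6: "Q (Q x y) z = Q x (Q y (Q x z))"
  using quad_jordan unfolding quad_jordan_def by blast+

lemma sq_scale: "sq (c *s x) = (c * c) *s sq x"
  and Q_scale_left: "Q (c *s x) y = (c * c) *s Q x y"
  using quad_jordan unfolding quad_jordan_def quadratic_map_def by auto

lemma sq_add: "sq (x + y) = sq x + sq y + circ x y"
  by (simp add: jcirc_def)

lemma Q_add_left: "Q (x + z) y = Q x y + Q z y + triple x y z"
  by (simp add: jtriple_def)

lemma linear_Q: "Vector_Spaces.linear (*s) (*s) (Q x)"
  and linear_circ_left: "Vector_Spaces.linear (*s) (*s) (\<lambda>x. circ x y)"
  and linear_circ_right: "Vector_Spaces.linear (*s) (*s) (circ x)"
  and linear_triple_left: "Vector_Spaces.linear (*s) (*s) (\<lambda>x. triple x y z)"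
  and linear_triple_right: "Vector_Spaces.linear (*s) (*s) (triple x y)"
  using quad_jordan
  unfolding quad_jordan_def quadratic_map_def jcirc_def[abs_def] jtriple_def[abs_def]
  by blast+

lemmas Q_add = linear_map_add[OF linear_Q]
  and Q_scale = linear_map_scale[OF linear_Q]

lemma linear_triple_middle: "Vector_Spaces.linear (*s) (*s) (\<lambda>y. triple x y z)"
  unfolding Vector_Spaces.linear_iff jtriple_def
  by (simp add: vector_space_axioms Q_add Q_scale scale_right_diff_distrib)

lemmas Q_zero_right [simp] = linear_map_zero[OF linear_Q]
lemmas circ_add_left = linear_map_add[OF linear_circ_left]
  and circ_zero_left [simp] = linear_map_zero[OF linear_circ_left]
  and circ_add_right = linear_map_add[OF linear_circ_right]
  and circ_zero_right [simp] = linear_map_zero[OF linear_circ_right]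
lemmas triple_add_left = linear_map_add[OF linear_triple_left]
  and triple_scale_left = linear_map_scale[OF linear_triple_left]
  and triple_zero_left [simp] = linear_map_zero[OF linear_triple_left]
  and triple_add_middle = linear_map_add[OF linear_triple_middle]
  and triple_zero_middle [simp] = linear_map_zero[OF linear_triple_middle]
  and triple_zero_right [simp] = linear_map_zero[OF linear_triple_right]

lemma Q_zero_left [simp]: "Q 0 y = 0"
  using Q_scale_left[of 0 0 y] by simp

lemma sq_zero [simp]: "sq 0 = 0"
  using sq_scale[of 0 0] by simp

lemma circ_comm: "circ x y = circ y x"
  by (simp add: jcirc_def add.commute)

lemma triple_comm: "triple x y z = triple z y x"
  by (simp add: jtriple_def add.commute)

lemma circ_self: "circ y y = sq y + sq y"
  using sq_add[of y y] sq_scale[of 2 y] scale_left_distrib[of 1 1 y] by (simp add: scale_four)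

lemma triple_self: "triple y x y = Q y x + Q y x"
  using Q_add_left[of y y x] Q_scale_left[of 2 y x] scale_left_distrib[of 1 1 y]
  by (simp add: scale_four)

declare jpow.simps [simp del]

lemma jpow_one [simp]: "pow (Suc 0) x = x"
  by (simp add: jpow.simps)

lemma jpow_two: "pow 2 x = sq x"
  by (simp add: jpow.simps)

lemma jpow_even: "k \<ge> 1 \<Longrightarrow> pow (2 * k) x = sq (pow k x)"
  by (subst jpow.simps) simp

lemma jpow_odd: "k \<ge> 1 \<Longrightarrow> pow (Suc (2 * k)) x = Q (pow k x) x"
  by (subst jpow.simps) simp

lemma Q_jpow: "k \<ge> 1 \<Longrightarrow> Q (pow k x) = Q x ^^ k"
proof (induction k rule: less_induct)
  case (less k)
  consider "k = 1" | h where "k = 2 * h" "h \<ge> 1" | h where "k = 2 * h + 1" "h \<ge> 1"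
    using less.prems by (cases "k = 1"; cases "even k") (auto elim!: evenE oddE)
  then show ?case
  proof cases
    case 1
    then show ?thesis by simp
  next
    case 2
    have "Q (pow k x) z = (Q x ^^ k) z" for z
    proof -
      have "Q (pow k x) z = Q (pow h x) (Q (pow h x) z)"
        using 2 by (simp add: jpow_even M5)
      also have "\<dots> = (Q x ^^ k) z"
        using less.IH[of h] 2 by (simp add: mult_2 funpow_add)
      finally show ?thesis .
    qed
    then show ?thesis by blast
  next
    case 3
    have "Q (pow k x) z = (Q x ^^ k) z" for z
    proof -
      have "Q (pow k x) z = Q (pow h x) (Q x (Q (pow h x) z))"
        using 3 by (simp add: jpow_odd M6)
      also have "\<dots> = (Q x ^^ k) z"
        using less.IH[of h] 3 by (simp add: mult_2 funpow_add funpow_swap1)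
      finally show ?thesis .
    qed
    then show ?thesis by blast
  qed
qed

lemma jpow_odd_eq: "pow (Suc (2 * k)) x = (Q x ^^ k) x"
  by (cases "k = 0") (simp_all add: jpow_odd Q_jpow)

lemma sq_Q_power: "sq ((Q x ^^ m) x) = (Q x ^^ (2 * m)) (sq x)"
proof (induction m)
  case (Suc m)
  have "sq ((Q x ^^ Suc m) x) = Q x (Q ((Q x ^^ m) x) (sq x))"
    using M4 by simp
  also have "Q ((Q x ^^ m) x) = Q x ^^ (2 * m + 1)"
    using Q_jpow[of "Suc (2 * m)" x] by (simp add: jpow_odd_eq)
  finally show ?case by (simp add: funpow_add)
qed simp

lemma jpow_even_eq: "pow (Suc (Suc (2 * k))) x = (Q x ^^ k) (sq x)"
proof (induction k rule: less_induct)
  case (less k)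
  have square: "pow (Suc (Suc (2 * k))) x = sq (pow (Suc k) x)"
    using jpow_even[of "Suc k" x] by simp
  show ?case
  proof (cases "even k")
    case True
    then obtain m where "k = 2 * m" by blast
    then show ?thesis using square jpow_odd_eq[of m x] sq_Q_power by simp
  next
    case False
    then obtain h where h: "k = Suc (2 * h)" by (auto elim: oddE)
    have "pow (Suc k) x = sq (pow (Suc h) x)"
      using jpow_even[of "Suc h" x] h by simp
    then have "pow (Suc (Suc (2 * k))) x = Q (pow (Suc h) x) (sq (pow (Suc h) x))"
      using square M3 by simp
    also have "\<dots> = (Q x ^^ Suc h) (pow (Suc (Suc (2 * h))) x)"
      using Q_jpow[of "Suc h" x] jpow_even[of "Suc h" x] by simp
    also have "pow (Suc (Suc (2 * h))) x = (Q x ^^ h) (sq x)"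
      using less.IH[of h] h by simp
    finally show ?thesis using h by (simp add: mult_2 funpow_add)
  qed
qed

lemma Q_power_add: "(Q x ^^ j) (y + z) = (Q x ^^ j) y + (Q x ^^ j) z"
  by (induction j) (simp_all add: Q_add)

lemma Q_power_jpow:
  assumes "m \<ge> 1" shows "(Q x ^^ j) (pow m x) = pow (2 * j + m) x"
  using assms
proof (cases rule: positive_nat_parity_cases)
  case (even k)
  then show ?thesis
    using jpow_even_eq[of k x] jpow_even_eq[of "j + k" x] by (simp add: funpow_add)
next
  case (odd k)
  then show ?thesis
    using jpow_odd_eq[of k x] jpow_odd_eq[of "j + k" x] by (simp add: funpow_add)
qed

lemma Q_jpow_self: "m \<ge> 1 \<Longrightarrow> Q x (pow m x) = pow (m + 2) x"
  using Q_power_jpow[where j = 1] by simp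

lemma circ_jpow_self: "k \<ge> 1 \<Longrightarrow> circ (pow k x) x = pow (k + 1) x + pow (k + 1) x"
proof -
  have circ_Q_power: "circ ((Q x ^^ j) y) x = (Q x ^^ j) (circ y x)" for j y
    by (induction j) (simp_all add: M2)
  assume "k \<ge> 1"
  then show ?thesis
  proof (cases rule: positive_nat_parity_cases)
    case (even j)
    have "circ (sq x) x = Q x x + Q x x"
      using M1[of x x] triple_self[of x x] by simp
    then show ?thesis
      using jpow_odd_eq[of "Suc j" x]
      by (simp add: even jpow_even_eq circ_Q_power Q_power_add funpow_swap1)
  next
    case (odd j)
    then show ?thesis
      using jpow_even_eq[of j x] by (simp add: jpow_odd_eq circ_Q_power circ_self Q_power_add)
  qed
qed

lemma Q_power_zero: "(Q x ^^ j) 0 = 0"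
  by (induction j) simp_all

lemma abs_zero_divisor_jpow:
  assumes "n \<ge> 1" and "pow n a = 0" and "n < k"
  shows "abs_zero_divisor Q (pow k a)"
proof -
  have "Q (pow k a) y = (Q a ^^ (k - n)) (Q (pow n a) y)" for y
    using assms Q_jpow[of k a] Q_jpow[of n a]
    by (simp flip: funpow_add[unfolded comp_def, THEN fun_cong])
  then show ?thesis
    using assms(2) by (simp add: abs_zero_divisor_def Q_power_zero fun_eq_iff)
qed

section \<open>Linearization over an infinite field\<close>

lemma poly_map_Q:
  assumes "poly_map scale f" and "poly_map scale g"
  shows "poly_map scale (\<lambda>c. Q (f c) (g c))"
proof -
  obtain M w where w: "g = (\<lambda>c. \<Sum>j\<le>M. c ^ j *s w j)" using assms(2) by (rule poly_mapE)
  have "poly_map scale (\<lambda>c. Q (f c) y)" for y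
    using assms(1)
    by (rule poly_map_quadratic[OF Q_add_left Q_scale_left linear_triple_right linear_triple_left])
  then have "poly_map scale (\<lambda>c. \<Sum>j\<le>M. c ^ j *s Q (f c) (w j))"
    by (intro poly_map_sum poly_map_scale_power finite_atMost)
  then show ?thesis
    by (simp add: w linear_map_sum[OF linear_Q] Q_scale)
qed

lemma poly_map_triple:
  assumes "poly_map scale f" and "poly_map scale g" and "poly_map scale h"
  shows "poly_map scale (\<lambda>c. triple (f c) (g c) (h c))"
proof -
  obtain N v where v: "f = (\<lambda>c. \<Sum>i\<le>N. c ^ i *s v i)" using assms(1) by (rule poly_mapE)
  have "poly_map scale (\<lambda>c. triple x (g c) (h c))" for x
    using assms(2,3) by (rule poly_map_bilinear[OF linear_triple_right linear_triple_middle])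
  then have "poly_map scale (\<lambda>c. \<Sum>i\<le>N. c ^ i *s triple (v i) (g c) (h c))"
    by (intro poly_map_sum poly_map_scale_power finite_atMost)
  then show ?thesis
    by (simp add: v linear_map_sum[OF linear_triple_left] triple_scale_left)
qed

lemma poly_expansion_sq:
  "poly_expansion scale f A B \<Longrightarrow> poly_expansion scale (\<lambda>c. sq (f c)) (sq A) (circ A B)"
  by (rule poly_expansion_quadratic[OF sq_add sq_scale linear_circ_right linear_circ_left])

lemma poly_expansion_circ:
  "poly_expansion scale f A B \<Longrightarrow> poly_expansion scale g C D \<Longrightarrow>
    poly_expansion scale (\<lambda>c. circ (f c) (g c)) (circ A C) (circ B C + circ A D)"
  by (rule poly_expansion_bilinear[OF linear_circ_right linear_circ_left])

lemma poly_expansion_Q: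
  assumes f: "poly_expansion scale f A B" and g: "poly_expansion scale g C D"
  shows "poly_expansion scale (\<lambda>c. Q (f c) (g c)) (Q A C) (triple A C B + Q A D)"
proof -
  obtain X where X: "poly_map scale X" "X 0 = D" "g = (\<lambda>c. C + c *s X c)"
    using g by (rule poly_expansionE)
  have "poly_expansion scale (\<lambda>c. Q (f c) C) (Q A C) (triple A C B)"
    using f
    by (rule poly_expansion_quadratic[OF Q_add_left Q_scale_left linear_triple_right linear_triple_left])
  then have "poly_expansion scale (\<lambda>c. Q (f c) C + c *s Q (f c) (X c))
      (Q A C) (triple A C B + Q (f 0) (X 0))"
    by (rule poly_expansion_add_scaled) (intro poly_map_Q X(1) poly_expansion_poly_map[OF f])
  moreover have "f 0 = A"
    using f by (auto elim: poly_expansionE)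
  ultimately show ?thesis
    by (simp add: X Q_add Q_scale)
qed

lemma poly_expansion_triple:
  assumes f: "poly_expansion scale f A B" and g: "poly_expansion scale g C D"
    and h: "poly_expansion scale h E F"
  shows "poly_expansion scale (\<lambda>c. triple (f c) (g c) (h c)) (triple A C E)
    (triple A D E + triple A C F + triple B C E)"
proof -
  obtain Y where Y: "poly_map scale Y" "Y 0 = B" "f = (\<lambda>c. A + c *s Y c)"
    using f by (rule poly_expansionE)
  have "poly_expansion scale (\<lambda>c. triple A (g c) (h c))
      (triple A C E) (triple A D E + triple A C F)"
    using g h by (rule poly_expansion_bilinear[OF linear_triple_right linear_triple_middle])
  then have "poly_expansion scale (\<lambda>c. triple A (g c) (h c) + c *s triple (Y c) (g c) (h c))
      (triple A C E) (triple A D E + triple A C F + triple (Y 0) (g 0) (h 0))"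
    by (rule poly_expansion_add_scaled)
      (intro poly_map_triple Y(1) poly_expansion_poly_map[OF g] poly_expansion_poly_map[OF h])
  moreover have "g 0 = C" "h 0 = E"
    using g h by (auto elim: poly_expansionE)
  ultimately show ?thesis
    by (simp add: Y triple_add_left triple_scale_left)
qed

end

locale quadratic_jordan_infinite = quadratic_jordan scale sq Q
  for scale :: "'k::field \<Rightarrow> 'a::ab_group_add \<Rightarrow> 'a" (infixr \<open>*s\<close> 75) and sq Q +
  assumes infinite_scalars: "infinite (UNIV :: 'k set)"
begin

lemma linearization:
  assumes "poly_expansion scale f A B" and "poly_expansion scale g A' B'" and "\<And>c. f c = g c"
  shows "B = B'"
proof -
  have "f = g" using assms(3) by blast
  then show ?thesis
    using poly_expansion_unique[OF infinite_scalars assms(1)] assms(2) by blast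
qed

lemma M1_linearized: "triple x z y + triple z x y = circ (circ x z) y"
proof -
  have "poly_expansion scale (\<lambda>c. triple (x + c *s z) (x + c *s z) y) (triple x x y)
      (triple x z y + triple x x 0 + triple z x y)"
    by (intro poly_expansion_triple poly_expansion_line poly_expansion_const)
  moreover have "poly_expansion scale (\<lambda>c. circ (sq (x + c *s z)) y) (circ (sq x) y)
      (circ (circ x z) y + circ (sq x) 0)"
    by (intro poly_expansion_circ poly_expansion_sq poly_expansion_line poly_expansion_const)
  ultimately show ?thesis by (simp add: linearization M1)
qed

lemma M2_linearized:
  "circ (triple x y z) x + circ (Q x y) z = triple x (circ y x) z + Q x (circ y z)"
proof -
  have "poly_expansion scale (\<lambda>c. circ (Q (x + c *s z) y) (x + c *s z)) (circ (Q x y) x)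
      (circ (triple x y z + Q x 0) x + circ (Q x y) z)"
    by (intro poly_expansion_circ poly_expansion_Q poly_expansion_line poly_expansion_const)
  moreover have "poly_expansion scale (\<lambda>c. Q (x + c *s z) (circ y (x + c *s z))) (Q x (circ y x))
      (triple x (circ y x) z + Q x (circ 0 x + circ y z))"
    by (intro poly_expansion_circ poly_expansion_Q poly_expansion_line poly_expansion_const)
  ultimately show ?thesis by (simp add: linearization M2)
qed

lemma M3_linearized: "triple x (sq x) z + Q x (circ x z) = circ (sq x) (circ x z)"
proof -
  have "poly_expansion scale (\<lambda>c. Q (x + c *s z) (sq (x + c *s z))) (Q x (sq x))
      (triple x (sq x) z + Q x (circ x z))"
    by (intro poly_expansion_Q poly_expansion_sq poly_expansion_line)
  moreover have "poly_expansion scale (\<lambda>c. sq (sq (x + c *s z)))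
      (sq (sq x)) (circ (sq x) (circ x z))"
    by (intro poly_expansion_sq poly_expansion_line)
  ultimately show ?thesis by (simp add: linearization M3)
qed

lemma M4_linearized: "triple x (Q y (sq x)) z + Q x (Q y (circ x z)) = circ (Q x y) (triple x y z)"
proof -
  have "poly_expansion scale (\<lambda>c. Q (x + c *s z) (Q y (sq (x + c *s z)))) (Q x (Q y (sq x)))
      (triple x (Q y (sq x)) z + Q x (triple y (sq x) 0 + Q y (circ x z)))"
    by (intro poly_expansion_Q poly_expansion_sq poly_expansion_line poly_expansion_const)
  moreover have "poly_expansion scale (\<lambda>c. sq (Q (x + c *s z) y)) (sq (Q x y))
      (circ (Q x y) (triple x y z + Q x 0))"
    by (intro poly_expansion_sq poly_expansion_Q poly_expansion_line poly_expansion_const)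
  ultimately show ?thesis by (simp add: linearization M4)
qed

lemma M5_linearized: "triple (sq x) w (circ x z) = triple x (Q x w) z + Q x (triple x w z)"
proof -
  have "poly_expansion scale (\<lambda>c. Q (sq (x + c *s z)) w) (Q (sq x) w)
      (triple (sq x) w (circ x z) + Q (sq x) 0)"
    by (intro poly_expansion_Q poly_expansion_sq poly_expansion_line poly_expansion_const)
  moreover have "poly_expansion scale (\<lambda>c. Q (x + c *s z) (Q (x + c *s z) w)) (Q x (Q x w))
      (triple x (Q x w) z + Q x (triple x w z + Q x 0))"
    by (intro poly_expansion_Q poly_expansion_line poly_expansion_const)
  ultimately show ?thesis by (simp add: linearization M5)
qed

lemma M6_linearized:
  "triple (Q x y) v (triple x y z) = triple x (Q y (Q x v)) z + Q x (Q y (triple x v z))"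
proof -
  have "poly_expansion scale (\<lambda>c. Q (Q (x + c *s z) y) v) (Q (Q x y) v)
      (triple (Q x y) v (triple x y z + Q x 0) + Q (Q x y) 0)"
    by (intro poly_expansion_Q poly_expansion_line poly_expansion_const)
  moreover have "poly_expansion scale (\<lambda>c. Q (x + c *s z) (Q y (Q (x + c *s z) v)))
      (Q x (Q y (Q x v)))
      (triple x (Q y (Q x v)) z + Q x (triple y (Q x v) 0 + Q y (triple x v z + Q x 0)))"
    by (intro poly_expansion_Q poly_expansion_line poly_expansion_const)
  ultimately show ?thesis by (simp add: linearization M6)
qed

section \<open>The Lucas recursion for powers\<close>

abbreviation L :: "'a \<Rightarrow> nat \<Rightarrow> 'a \<Rightarrow> 'a" where "L x \<equiv> lucas (circ x) (Q x)"

lemma commuting_additive_circ_Q: "commuting_additive (circ x) (Q x)"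
proof
  show "circ x (Q x z) = Q x (circ x z)" for z
    using M2[of x z] by (simp add: circ_comm)
qed (simp_all add: circ_add_right Q_add)

lemmas lucas_circ_commute = commuting_additive.lucas_commute_V[OF commuting_additive_circ_Q]
  and lucas_product = commuting_additive.lucas_product[OF commuting_additive_circ_Q]

lemma circ_sq_lucas: "circ (sq x) w = L x 2 w"
proof -
  have "circ (sq x) w + (Q x w + Q x w) = circ x (circ x w)"
    using M1_linearized[of x w x] M1[of x w] triple_self[of x w] triple_comm[of w x x]
    by (simp add: circ_comm add.commute)
  then show ?thesis by (simp add: numeral_2_eq_2 Q_add eq_diff_eq)
qed

lemma triple_jpow_sum:
  "m \<ge> 1 \<Longrightarrow>
    triple x (pow m x) w + triple (pow m x) x w = circ (pow (Suc m) x) w + circ (pow (Suc m) x) w"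
  using M1_linearized[of x "pow m x" w] circ_jpow_self[of m x]
  by (simp add: circ_comm[of x] circ_add_left)

lemma circ_jpow_lucas_step:
  assumes "k \<ge> 2"
    and "triple x (pow (k - 1) x) w = L x k w" and "triple x (pow k x) w = L x (Suc k) w"
    and "circ (pow (k - 1) x) w = L x (k - 1) w"
  shows "circ (pow (Suc k) x) w = L x (Suc k) w"
proof -
  have "circ x (triple x (pow (k - 1) x) w) + circ (pow (Suc k) x) w
      = triple x (pow k x) w + triple x (pow k x) w + Q x (circ (pow (k - 1) x) w)"
    using M2_linearized[of x "pow (k - 1) x" w] assms(1) Q_jpow_self[of "k - 1" x]
      circ_jpow_self[of "k - 1" x] by (simp add: circ_comm triple_add_middle)
  then have "circ (pow (Suc k) x) w + circ x (L x k w)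
      = L x (Suc k) w + (L x (Suc k) w + Q x (L x (k - 1) w))"
    using assms(2-4) by (simp add: algebra_simps)
  moreover obtain j where "k = Suc (Suc j)"
    using le_Suc_ex[OF assms(1)] by (auto simp: numeral_2_eq_2)
  then have "L x (Suc k) w = L x k (circ x w) - Q x (L x (k - 1) w)"
    by simp
  then have "L x (Suc k) w + Q x (L x (k - 1) w) = circ x (L x k w)"
    by (simp add: lucas_circ_commute)
  ultimately show ?thesis by (metis add_right_cancel)
qed

lemma triple_self_lucas: "triple x x w = L x 2 w"
  using M1 circ_sq_lucas by simp

lemma triple_sq_lucas: "triple x (sq x) w = L x 3 w"
  using M3_linearized[of x w] circ_sq_lucas[of x "circ x w"]
  by (simp add: numeral_3_eq_3 numeral_2_eq_2 eq_diff_eq)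

lemma triple_cube_lucas:
  assumes "\<And>v. triple (sq x) x v = L x 3 v"
  shows "triple x (pow 3 x) w = L x 4 w"
proof -
  have "pow 3 x = Q x x"
    using jpow_odd_eq[of 1 x] by (simp add: numeral_3_eq_3)
  then have "triple x (pow 3 x) w = L x 3 (circ x w) - Q x (L x 2 w)"
    using M5_linearized[of x x w] assms triple_self_lucas by (simp add: eq_diff_eq)
  also have "\<dots> = L x 4 w"
    by (simp add: eval_nat_numeral)
  finally show ?thesis .
qed

lemma triple_jpow_lucas_even:
  assumes "j \<ge> 1" and "triple x (pow j x) w = L x (Suc j) w"
    and "\<And>v. circ (pow (Suc (Suc j)) x) v = L x (Suc (Suc j)) v"
  shows "triple x (pow (Suc (Suc (2 * j))) x) w = L x (Suc (Suc (Suc (2 * j)))) w"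
proof -
  have "triple x (pow (Suc (Suc (2 * j))) x) w
      = L x (Suc j + 1) (L x (Suc j) w) - (Q x ^^ Suc j) (L x 1 w)"
    using M4_linearized[of x "pow j x" w] assms Q_jpow[of j x] Q_jpow_self[of j x]
    by (simp add: jpow_even_eq eq_diff_eq)
  also have "\<dots> = L x (Suc (Suc (Suc (2 * j)))) w"
    using lucas_product[of x "Suc j" 1 w] by simp
  finally show ?thesis .
qed

lemma triple_jpow_lucas_odd:
  assumes "j \<ge> 1" and "triple x (pow j x) w = L x (Suc j) w"
    and "\<And>v. triple (pow (Suc (Suc j)) x) x v = L x (Suc (Suc (Suc j))) v"
  shows "triple x (pow (Suc (Suc (Suc (2 * j)))) x) w = L x (Suc (Suc (Suc (Suc (2 * j))))) w"
proof -
  have "Q (pow j x) (Q x x) = pow (Suc (Suc (Suc (2 * j)))) x"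
    using assms(1) Q_jpow[of j x] jpow_odd_eq[of "Suc j" x] by (simp add: funpow_swap1)
  then have "triple x (pow (Suc (Suc (Suc (2 * j)))) x) w
      = L x (Suc j + 2) (L x (Suc j) w) - (Q x ^^ Suc j) (L x 2 w)"
    using M6_linearized[of x "pow j x" x w] assms Q_jpow[of j x] Q_jpow_self[of j x]
      triple_self_lucas
    by (simp add: eq_diff_eq)
  also have "\<dots> = L x (Suc (Suc (Suc (Suc (2 * j))))) w"
    using lucas_product[of x "Suc j" 2 w] by simp
  finally show ?thesis .
qed

lemma jpow_lucas:
  "k \<ge> 1 \<Longrightarrow>
    (\<forall>w. triple x (pow k x) w = L x (Suc k) w) \<and> (\<forall>w. circ (pow (Suc k) x) w = L x (Suc k) w)"
proof (induction k rule: less_induct)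
  case (less k)
  have circ_pow: "circ (pow m x) w = L x m w" if "1 \<le> m" "m \<le> k" for m w
  proof (cases "m = 1")
    case False
    then show ?thesis using less.IH[of "m - 1"] that by simp
  qed simp
  have triple_pow: "triple x (pow m x) w = L x (Suc m) w" if "1 \<le> m" "m < k" for m w
    using less.IH that by blast
  have triple_pow_swap: "triple (pow m x) x w = L x (Suc m) w" if "1 \<le> m" "Suc m \<le> k" for m w
    using triple_jpow_sum[OF that(1), of x w] triple_pow[of m w] circ_pow[of "Suc m" w] that by simp
  have triple_k: "triple x (pow k x) w = L x (Suc k) w" for w
  proof -
    \<comment> \<open>The doubling steps need \<open>j \<ge> 1\<close> (\<open>pow 0\<close> is a dummy), so \<open>k \<le> 3\<close> are seeds.\<close>
    consider "k = 1" | "k = 2" | "k = 3"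
      | (even) j where "j \<ge> 1" "k = Suc (Suc (2 * j))"
      | (odd) j where "j \<ge> 1" "k = Suc (Suc (Suc (2 * j)))"
      using less.prems
    proof (cases rule: positive_nat_parity_cases)
      case (even j)
      then show thesis using that(2) that(4)[of j] by (cases "j = 0") auto
    next
      case (odd j)
      show thesis
      proof (cases "j \<le> 1")
        case True
        then show ?thesis using odd that(1,3) by (auto simp: le_Suc_eq)
      next
        case False
        then show ?thesis using odd by (intro that(5)[of "j - 1"]) auto
      qed
    qed
    then show ?thesis
    proof cases
      case 1
      then show ?thesis using triple_self_lucas[of x w] by (simp add: numeral_2_eq_2)
    next
      case 2
      then show ?thesis using triple_sq_lucas by (simp add: jpow_two)
    next
      case 3
      then show ?thesis using triple_cube_lucas triple_pow_swap[of 2] by (simp add: jpow_two)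
    next
      case even
      then show ?thesis using triple_jpow_lucas_even triple_pow circ_pow by simp
    next
      case odd
      then show ?thesis using triple_jpow_lucas_odd triple_pow triple_pow_swap by simp
    qed
  qed
  have circ_k: "circ (pow (Suc k) x) w = L x (Suc k) w" for w
  proof (cases "k = 1")
    case True
    then show ?thesis using circ_sq_lucas[of x w] jpow_two[of x] by (simp add: numeral_2_eq_2)
  next
    case False
    then show ?thesis using circ_jpow_lucas_step less.prems triple_pow[of "k - 1"] triple_k circ_pow[of "k - 1"] by simp
  qed
  show ?case using triple_k circ_k by blast
qed

lemma triple_jpow_pred_eq_0:
  assumes "n \<ge> 2" and "pow n x = 0"
  shows "triple (pow (n - 1) x) x w = 0"
proof -
  have n: "Suc (n - 1) = n" using assms(1) by simp
  have "triple x (pow (n - 1) x) w = circ (pow n x) w"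
    using jpow_lucas[of "n - 1" x] assms(1) by (simp add: n)
  then show ?thesis
    using triple_jpow_sum[of "n - 1" x w] assms by (simp add: n)
qed

lemma poly_expansion_jpow: "\<exists>B. poly_expansion scale (\<lambda>c. pow m (a + c *s b)) (pow m a) B"
proof (induction m rule: less_induct)
  case (less m)
  show ?case
  proof (cases "m \<le> 1")
    case True
    then have "pow m y = y" for y by (subst jpow.simps) simp
    then show ?thesis using poly_expansion_line by auto
  next
    case False
    then obtain B
      where B: "poly_expansion scale (\<lambda>c. pow (m div 2) (a + c *s b)) (pow (m div 2) a) B"
      using less.IH[of "m div 2"] by auto
    show ?thesis
    proof (cases "even m")
      case True
      then have "pow m y = sq (pow (m div 2) y)" for y using False by (subst jpow.simps) simp
      then show ?thesis using poly_expansion_sq[OF B] by auto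
    next
      case odd: False
      then have "pow m y = Q (pow (m div 2) y) y" for y using False by (subst jpow.simps) simp
      then show ?thesis using poly_expansion_Q[OF B poly_expansion_line] by auto
    qed
  qed
qed

lemma abs_zero_divisor_jpow_pred:
  assumes "n \<ge> 2" and "\<And>y. pow n y = 0" and "\<And>y. pow (2 * n - 1) y = 0"
  shows "abs_zero_divisor Q (pow (n - 1) a)"
proof -
  have odd: "pow (2 * n - 1) y = Q (pow (n - 1) y) y" for y
    using jpow_odd[of "n - 1" y] assms(1) by (simp add: Suc_diff_Suc mult_2)
  have "Q (pow (n - 1) a) b = 0" for b
  proof -
    obtain B where "poly_expansion scale (\<lambda>c. pow (n - 1) (a + c *s b)) (pow (n - 1) a) B"
      using poly_expansion_jpow by blast
    then have "poly_expansion scale (\<lambda>c. Q (pow (n - 1) (a + c *s b)) (a + c *s b))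
        (Q (pow (n - 1) a) a) (triple (pow (n - 1) a) a B + Q (pow (n - 1) a) b)"
      using poly_expansion_line by (rule poly_expansion_Q)
    then have "triple (pow (n - 1) a) a B + Q (pow (n - 1) a) b = 0"
      using poly_expansion_const[of 0] by (rule linearization) (metis odd assms(3))
    then show ?thesis
      using triple_jpow_pred_eq_0[OF assms(1,2)] by simp
  qed
  then show ?thesis by (simp add: abs_zero_divisor_def fun_eq_iff)
qed

end

theorem lemma17:
  fixes scale :: "'k::field \<Rightarrow> 'a::ab_group_add \<Rightarrow> 'a"
    and sq :: "'a \<Rightarrow> 'a" and Q :: "'a \<Rightarrow> 'a \<Rightarrow> 'a" and n :: nat
  assumes "quad_jordan scale sq Q"
    and "infinite (UNIV :: 'k set)"
    and "n \<ge> 2"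
    and "\<forall>x. jpow sq Q n x = 0"
  shows "(\<forall>a. \<forall>k \<in> {n+1..2*n-1}. abs_zero_divisor Q (jpow sq Q k a))
       \<and> ((\<forall>x. \<forall>k \<in> {n..2*n-1}. jpow sq Q k x = 0)
           \<longrightarrow> (\<forall>a. abs_zero_divisor Q (jpow sq Q (n-1) a)))"
proof -
  interpret quadratic_jordan_infinite scale sq Q
    using assms(1,2) by unfold_locales
  have "abs_zero_divisor Q (pow k a)" if "n + 1 \<le> k" for a k
    using abs_zero_divisor_jpow[of n a k] assms(3,4) that by simp
  moreover have "abs_zero_divisor Q (pow (n - 1) a)"
    if "\<forall>x. \<forall>k \<in> {n..2*n-1}. pow k x = 0" for a
    using abs_zero_divisor_jpow_pred[of n a] assms(3,4) that by simp
  ultimately show ?thesis by auto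
qed

end
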